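(* Let $\Lambda$ be a row-finite $k$-graph with no sources and $R$ a commutative ring with $1$. Let $\mu,\nu\in\Lambda$ with $s(\mu)=s(\nu)$ and $r\in R\setminus\{0\}$ such that $r\,s_\mu s_{\nu^*}\in\mathcal{D}'$. Then $(\mu,\nu)$ is a cycline pair.
   Context: A $k$-graph is a countable category $\Lambda$ (vertices $\Lambda^0$, paths, maps $r,s$) with a degree functor $d:\Lambda\to\mathbb{N}^k$ satisfying unique factorization: if $d(\lambda)=m+n$ there are unique $\mu,\nu$ with $s(\mu)=r(\nu)$, $d(\mu)=m,d(\nu)=n$, $\lambda=\mu\nu$. $v\Lambda=\{\lambda:r(\lambda)=v\}$, $v\Lambda^n$ those of degree $n$; row-finite with no sources means each $v\Lambda^n$ is finite and nonempty. ${\rm KP}_R(\Lambda)$ is the universal $R$-algebra generated by $p_v$ ($v\in\Lambda^0$), $s_\lambda,s_{\lambda^*}$ ($d(\lambda)\ne0$) with relations (KP1) $p_v$ mutually orthogonal idempotents; (KP2) $s_\lambda s_\mu=s_{\lambda\mu}$, $s_{\mu^*}s_{\lambda^*}=s_{(\lambda\mu)^*}$, $p_{r(\lambda)}s_\lambda=s_\lambda=s_\lambda p_{s(\lambda)}$, $p_{s(\lambda)}s_{\lambda^*}=s_{\lambda^*}=s_{\lambda^*}p_{r(\lambda)}$ when $r(\mu)=s(\lambda)$; (KP3) $s_{\lambda^*}s_\mu=\delta_{\lambda,\mu}p_{s(\lambda)}$ when $d(\lambda)=d(\mu)$; (KP4) $p_v=\sum_{\lambda\in v\Lambda^n}s_\lambda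 s_{\lambda^*}$ for $n\ne0$. Convention $s_v=s_{v^*}=p_v$. $\mathcal{D}$ is the $R$-subalgebra generated by $\{s_\mu s_{\mu^*}:\mu\in\Lambda\}$, and $\mathcal{D}'=\{a\in{\rm KP}_R(\Lambda): ad=da\ \forall d\in\mathcal{D}\}$. A pair $(\alpha,\beta)$ with $s(\alpha)=s(\beta)$ is a cycline pair if $s_{\alpha\gamma}s_{(\alpha\gamma)^*}=s_{\beta\gamma}s_{(\beta\gamma)^*}$ for all $\gamma\in s(\alpha)\Lambda$. *)

theory Defs
  imports Main "HOL-Library.Function_Algebras" "HOL-Library.Countable_Set"
begin

text \<open>A k-graph is given by its set of morphisms (paths) L, range and source maps r s
(objects/vertices are represented by their identity morphisms, so r and s map paths
to paths), composition c (c lam mu = lam mu, defined when s lam = r mu) and the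
degree functor d into N^k, with N^k rendered as 'k => nat for a finite type 'k.\<close>

definition kgraph ::
  "'p set \<Rightarrow> ('p \<Rightarrow> 'p) \<Rightarrow> ('p \<Rightarrow> 'p) \<Rightarrow> ('p \<Rightarrow> 'p \<Rightarrow> 'p) \<Rightarrow> ('p \<Rightarrow> ('k::finite \<Rightarrow> nat)) \<Rightarrow> bool"
where
  "kgraph L r s c d \<longleftrightarrow>
     countable L \<and>
     (\<forall>l\<in>L. r l \<in> L \<and> s l \<in> L \<and> r (r l) = r l \<and> s (r l) = r l \<and>
             r (s l) = s l \<and> s (s l) = s l \<and>
             c (r l) l = l \<and> c l (s l) = l \<and> d (r l) = 0 \<and> d (s l) = 0) \<and>
     (\<forall>l\<in>L. \<forall>m\<in>L. s l = r m \<longrightarrow>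
        c l m \<in> L \<and> r (c l m) = r l \<and> s (c l m) = s m \<and> d (c l m) = d l + d m) \<and>
     (\<forall>l\<in>L. \<forall>m\<in>L. \<forall>n\<in>L. s l = r m \<and> s m = r n \<longrightarrow> c (c l m) n = c l (c m n)) \<and>
     (\<forall>l\<in>L. \<forall>m n. d l = m + n \<longrightarrow>
        (\<exists>!(a, b). a \<in> L \<and> b \<in> L \<and> s a = r b \<and> d a = m \<and> d b = n \<and> c a b = l))"

definition vertices :: "'p set \<Rightarrow> ('p \<Rightarrow> 'p) \<Rightarrow> 'p set" where
  "vertices L r = r ` L"

definition vLn :: "'p set \<Rightarrow> ('p \<Rightarrow> 'p) \<Rightarrow> ('p \<Rightarrow> 'k \<Rightarrow> nat) \<Rightarrow> 'p \<Rightarrow> ('k \<Rightarrow> nat) \<Rightarrow> 'p set" where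
  "vLn L r d v n = {l \<in> L. r l = v \<and> d l = n}"

definition row_finite_no_sources ::
  "'p set \<Rightarrow> ('p \<Rightarrow> 'p) \<Rightarrow> ('p \<Rightarrow> 'k \<Rightarrow> nat) \<Rightarrow> bool" where
  "row_finite_no_sources L r d \<longleftrightarrow>
     (\<forall>v\<in>vertices L r. \<forall>n. finite (vLn L r d v n) \<and> vLn L r d v n \<noteq> {})"

text \<open>Generators p_v, s_lam, s_lam* .\<close>
datatype 'p kpgen = Pg 'p | Sg 'p | Stg 'p

definition validgen :: "'p set \<Rightarrow> ('p \<Rightarrow> 'p) \<Rightarrow> ('p \<Rightarrow> 'k \<Rightarrow> nat) \<Rightarrow> 'p kpgen \<Rightarrow> bool" where
  "validgen L r d g \<longleftrightarrow>
     (case g of Pg v \<Rightarrow> v \<in> vertices L r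
              | Sg l \<Rightarrow> l \<in> L \<and> d l \<noteq> 0
              | Stg l \<Rightarrow> l \<in> L \<and> d l \<noteq> 0)"

text \<open>Free (non-unital) R-algebra on the generators: finitely supported R-valued
functions on nonempty words in the generators; multiplication is concatenation
convolution.\<close>
definition freealg :: "'p set \<Rightarrow> ('p \<Rightarrow> 'p) \<Rightarrow> ('p \<Rightarrow> 'k \<Rightarrow> nat) \<Rightarrow> ('p kpgen list \<Rightarrow> 'r::comm_ring_1) set" where
  "freealg L r d = {f. finite {w. f w \<noteq> 0} \<and>
      (\<forall>w. f w \<noteq> 0 \<longrightarrow> w \<noteq> [] \<and> (\<forall>g\<in>set w. validgen L r d g))}"

definition fmul :: "('g list \<Rightarrow> 'r::comm_ring_1) \<Rightarrow> ('g list \<Rightarrow> 'r) \<Rightarrow> 'g list \<Rightarrow> 'r" where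
  "fmul f g = (\<lambda>w. \<Sum>i\<le>length w. f (take i w) * g (drop i w))"

definition fsmult :: "'r::comm_ring_1 \<Rightarrow> ('g list \<Rightarrow> 'r) \<Rightarrow> 'g list \<Rightarrow> 'r" where
  "fsmult a f = (\<lambda>w. a * f w)"

definition gen :: "'g \<Rightarrow> 'g list \<Rightarrow> 'r::comm_ring_1" where
  "gen x = (\<lambda>w. if w = [x] then 1 else 0)"

text \<open>p_v, and s_lam, s_lam* with the convention s_v = s_v* = p_v for degree-0 paths
(which are exactly the vertices).\<close>
definition pv :: "'p \<Rightarrow> 'p kpgen list \<Rightarrow> 'r::comm_ring_1" where
  "pv v = gen (Pg v)"

definition sp :: "('p \<Rightarrow> 'k \<Rightarrow> nat) \<Rightarrow> 'p \<Rightarrow> 'p kpgen list \<Rightarrow> 'r::comm_ring_1" where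
  "sp d l = (if d l = 0 then gen (Pg l) else gen (Sg l))"

definition sst :: "('p \<Rightarrow> 'k \<Rightarrow> nat) \<Rightarrow> 'p \<Rightarrow> 'p kpgen list \<Rightarrow> 'r::comm_ring_1" where
  "sst d l = (if d l = 0 then gen (Pg l) else gen (Stg l))"

text \<open>The relations (KP1)-(KP4), each written as an element x - y of the free algebra.\<close>
definition kp_relators ::
  "'p set \<Rightarrow> ('p \<Rightarrow> 'p) \<Rightarrow> ('p \<Rightarrow> 'p) \<Rightarrow> ('p \<Rightarrow> 'p \<Rightarrow> 'p) \<Rightarrow> ('p \<Rightarrow> ('k::finite \<Rightarrow> nat))
   \<Rightarrow> ('p kpgen list \<Rightarrow> 'r::comm_ring_1) set" where
  "kp_relators L r s c d =
     {fmul (pv v) (pv w) - (if v = w then pv v else 0) | v w. v \<in> vertices L r \<and> w \<in> vertices L r}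
   \<union> {fmul (sp d l) (sp d m) - sp d (c l m) | l m. l \<in> L \<and> m \<in> L \<and> d l \<noteq> 0 \<and> d m \<noteq> 0 \<and> r m = s l}
   \<union> {fmul (sst d m) (sst d l) - sst d (c l m) | l m. l \<in> L \<and> m \<in> L \<and> d l \<noteq> 0 \<and> d m \<noteq> 0 \<and> r m = s l}
   \<union> {fmul (pv (r l)) (sp d l) - sp d l | l. l \<in> L \<and> d l \<noteq> 0}
   \<union> {fmul (sp d l) (pv (s l)) - sp d l | l. l \<in> L \<and> d l \<noteq> 0}
   \<union> {fmul (pv (s l)) (sst d l) - sst d l | l. l \<in> L \<and> d l \<noteq> 0}
   \<union> {fmul (sst d l) (pv (r l)) - sst d l | l. l \<in> L \<and> d l \<noteq> 0}
   \<union> {fmul (sst d l) (sp d m) - (if l = m then pv (s l) else 0) | l m.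
        l \<in> L \<and> m \<in> L \<and> d l = d m \<and> d l \<noteq> 0}
   \<union> {pv v - (\<Sum>l\<in>vLn L r d v n. fmul (sp d l) (sst d l)) | v n. v \<in> vertices L r \<and> n \<noteq> 0}"

text \<open>The two-sided ideal of the free algebra generated by the relators;
KP_R(Lambda) = freealg / kp_ideal.\<close>
inductive_set kp_ideal ::
  "'p set \<Rightarrow> ('p \<Rightarrow> 'p) \<Rightarrow> ('p \<Rightarrow> 'p) \<Rightarrow> ('p \<Rightarrow> 'p \<Rightarrow> 'p) \<Rightarrow> ('p \<Rightarrow> ('k::finite \<Rightarrow> nat))
   \<Rightarrow> ('p kpgen list \<Rightarrow> 'r::comm_ring_1) set"
  for L r s c d where
  rel: "x \<in> kp_relators L r s c d \<Longrightarrow> x \<in> kp_ideal L r s c d"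
| zero: "0 \<in> kp_ideal L r s c d"
| add: "x \<in> kp_ideal L r s c d \<Longrightarrow> y \<in> kp_ideal L r s c d \<Longrightarrow> x + y \<in> kp_ideal L r s c d"
| smult: "x \<in> kp_ideal L r s c d \<Longrightarrow> fsmult a x \<in> kp_ideal L r s c d"
| lmult: "x \<in> kp_ideal L r s c d \<Longrightarrow> y \<in> freealg L r d \<Longrightarrow> fmul y x \<in> kp_ideal L r s c d"
| rmult: "x \<in> kp_ideal L r s c d \<Longrightarrow> y \<in> freealg L r d \<Longrightarrow> fmul x y \<in> kp_ideal L r s c d"

definition kp_eq ::
  "'p set \<Rightarrow> ('p \<Rightarrow> 'p) \<Rightarrow> ('p \<Rightarrow> 'p) \<Rightarrow> ('p \<Rightarrow> 'p \<Rightarrow> 'p) \<Rightarrow> ('p \<Rightarrow> ('k::finite \<Rightarrow> nat))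
   \<Rightarrow> ('p kpgen list \<Rightarrow> 'r::comm_ring_1) \<Rightarrow> ('p kpgen list \<Rightarrow> 'r) \<Rightarrow> bool" where
  "kp_eq L r s c d x y \<longleftrightarrow> x - y \<in> kp_ideal L r s c d"

text \<open>Lifts to the free algebra of the R-subalgebra D generated by {s_mu s_mu* : mu in Lambda}.\<close>
inductive_set diag_sub ::
  "'p set \<Rightarrow> ('p \<Rightarrow> 'k \<Rightarrow> nat) \<Rightarrow> ('p kpgen list \<Rightarrow> 'r::comm_ring_1) set"
  for L d where
  gen: "m \<in> L \<Longrightarrow> fmul (sp d m) (sst d m) \<in> diag_sub L d"
| add: "x \<in> diag_sub L d \<Longrightarrow> y \<in> diag_sub L d \<Longrightarrow> x + y \<in> diag_sub L d"
| smult: "x \<in> diag_sub L d \<Longrightarrow> fsmult a x \<in> diag_sub L d"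
| mult: "x \<in> diag_sub L d \<Longrightarrow> y \<in> diag_sub L d \<Longrightarrow> fmul x y \<in> diag_sub L d"

text \<open>x represents an element of the commutant D' of D in KP_R(Lambda).\<close>
definition in_commutant ::
  "'p set \<Rightarrow> ('p \<Rightarrow> 'p) \<Rightarrow> ('p \<Rightarrow> 'p) \<Rightarrow> ('p \<Rightarrow> 'p \<Rightarrow> 'p) \<Rightarrow> ('p \<Rightarrow> ('k::finite \<Rightarrow> nat))
   \<Rightarrow> ('p kpgen list \<Rightarrow> 'r::comm_ring_1) \<Rightarrow> bool" where
  "in_commutant L r s c d x \<longleftrightarrow>
     (\<forall>y\<in>diag_sub L d. kp_eq L r s c d (fmul x y) (fmul y x))"

definition cycline_pair ::
  "'p set \<Rightarrow> ('p \<Rightarrow> 'p) \<Rightarrow> ('p \<Rightarrow> 'p) \<Rightarrow> ('p \<Rightarrow> 'p \<Rightarrow> 'p) \<Rightarrow> ('p \<Rightarrow> ('k::finite \<Rightarrow> nat))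
   \<Rightarrow> 'r::comm_ring_1 itself \<Rightarrow> 'p \<Rightarrow> 'p \<Rightarrow> bool" where
  "cycline_pair L r s c d R a b \<longleftrightarrow>
     a \<in> L \<and> b \<in> L \<and> s a = s b \<and>
     (\<forall>g\<in>L. r g = s a \<longrightarrow>
        kp_eq L r s c d
          (fmul (sp d (c a g)) (sst d (c a g)) :: 'p kpgen list \<Rightarrow> 'r)
          (fmul (sp d (c b g)) (sst d (c b g))))"

end

theory Submission
  imports Defs
begin

text \<open>Let \<open>KP\<^sub>R(\<Lambda>)\<close> act on \<open>R\<close>-valued functions on the infinite path space. There
  \<open>s\<^sub>\<lambda> s\<^sub>\<lambda>\<^sup>*\<close> is multiplication by the indicator of the cylinder \<open>Z(\<lambda>)\<close>, while
  \<open>r s\<^sub>\<mu> s\<^sub>\<nu>\<^sup>*\<close> restricts to \<open>Z(\<mu>)\<close> and composes with the map \<open>\<mu>y \<mapsto> \<nu>y\<close>. If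
  \<open>r s\<^sub>\<mu> s\<^sub>\<nu>\<^sup>*\<close> commutes with all of \<open>\<D>\<close>, this map preserves every cylinder, and hence
  \<open>Z(\<mu>\<gamma>) = Z(\<nu>\<gamma>)\<close>. Two paths with the same cylinder have the same extensions of any
  large enough degree \<open>m\<close>, and by (KP4) \<open>s\<^sub>\<lambda> s\<^sub>\<lambda>\<^sup>*\<close> is the sum of \<open>s\<^sub>\<lambda>\<^sub>\<beta> s\<^sub>\<lambda>\<^sub>\<beta>\<^sup>*\<close> over the
  extensions \<open>\<lambda>\<beta>\<close> of degree \<open>m\<close>; so \<open>s\<^sub>\<mu>\<^sub>\<gamma> s\<^sub>\<mu>\<^sub>\<gamma>\<^sup>* = s\<^sub>\<nu>\<^sub>\<gamma> s\<^sub>\<nu>\<^sub>\<gamma>\<^sup>*\<close> already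
  in \<open>KP\<^sub>R(\<Lambda>)\<close>.\<close>

definition supp :: "('g list \<Rightarrow> 'r::comm_ring_1) \<Rightarrow> 'g list set" where
  "supp f = {w. f w \<noteq> 0}"

abbreviation finite_supp :: "('g list \<Rightarrow> 'r::comm_ring_1) \<Rightarrow> bool" where
  "finite_supp f \<equiv> finite (supp f)"

definition splits :: "'g list \<Rightarrow> ('g list \<times> 'g list) set" where
  "splits w = {(u, v). u @ v = w}"

lemma splits_eq: "splits w = (\<lambda>i. (take i w, drop i w)) ` {..length w}"
proof -
  have "(u, v) \<in> (\<lambda>i. (take i w, drop i w)) ` {..length w}" if "u @ v = w" for u v
    using that by (auto intro!: image_eqI[of _ _ "length u"])
  thus ?thesis unfolding splits_def by auto
qed

lemma finite_splits [simp]: "finite (splits w)"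
  unfolding splits_eq by simp

lemma fmul_splits: "fmul f g w = (\<Sum>p\<in>splits w. f (fst p) * g (snd p))"
proof -
  have "inj_on (\<lambda>i. (take i w, drop i w)) {..length w}"
    by (rule inj_onI) (metis atMost_iff length_take min.absorb2 prod.inject)
  thus ?thesis unfolding fmul_def splits_eq by (simp add: sum.reindex)
qed

lemma fmul_assoc: "fmul (fmul f g) h = fmul f (fmul g h)"
proof
  fix w
  have L: "fmul (fmul f g) h w = (\<Sum>z\<in>Sigma (splits w) (\<lambda>pt. splits (fst pt)).
        f (fst (snd z)) * g (snd (snd z)) * h (snd (fst z)))"
    unfolding fmul_splits[of _ h] fmul_splits[of f g]
    by (simp add: sum_distrib_right sum.Sigma split_def)
  have R: "fmul f (fmul g h) w = (\<Sum>z\<in>Sigma (splits w) (\<lambda>uq. splits (snd uq)).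
        f (fst (fst z)) * g (fst (snd z)) * h (snd (snd z)))"
    unfolding fmul_splits[of f] fmul_splits[of g h]
    by (simp add: sum_distrib_left sum.Sigma split_def mult.assoc)
  show "fmul (fmul f g) h w = fmul f (fmul g h) w"
    unfolding L R
    by (rule sum.reindex_bij_witness[where i="\<lambda>((u,q),(v,t)). ((u@v, t),(u,v))"
          and j="\<lambda>((p,t),(u,v)). ((u, v@t),(v,t))"]) (auto simp: splits_def)
qed

lemma fmul_add_left: "fmul (f + g) h = fmul f h + fmul g h"
  by (simp add: fmul_def fun_eq_iff algebra_simps sum.distrib)

lemma fmul_add_right: "fmul f (g + h) = fmul f g + fmul f h"
  by (simp add: fmul_def fun_eq_iff algebra_simps sum.distrib)

lemma fmul_diff_left: "fmul (f - g) h = fmul f h - fmul g h"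
  by (simp add: fmul_def fun_eq_iff algebra_simps sum_subtractf)

lemma fmul_diff_right: "fmul f (g - h) = fmul f g - fmul f h"
  by (simp add: fmul_def fun_eq_iff algebra_simps sum_subtractf)

lemma fmul_zero_left [simp]: "fmul 0 g = 0"
  by (simp add: fmul_def fun_eq_iff)

lemma fmul_zero_right [simp]: "fmul f 0 = 0"
  by (simp add: fmul_def fun_eq_iff)

lemma fmul_sum_right: "fmul f (\<Sum>i\<in>S. F i) = (\<Sum>i\<in>S. fmul f (F i))"
proof (induction S rule: infinite_finite_induct)
  case (insert a S) thus ?case using fmul_add_right by (metis sum.insert)
qed (metis sum.infinite sum.empty fmul_zero_right)+

lemma fmul_sum_left: "fmul (\<Sum>i\<in>S. F i) g = (\<Sum>i\<in>S. fmul (F i) g)"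
proof (induction S rule: infinite_finite_induct)
  case (insert a S) thus ?case using fmul_add_left by (metis sum.insert)
qed (metis sum.infinite sum.empty fmul_zero_left)+

lemma fsmult_minus_one: "f - g = f + fsmult (-1) g"
  by (simp add: fsmult_def fun_eq_iff)

lemma supp_fmul: "supp (fmul f g) \<subseteq> (\<lambda>(u,v). u @ v) ` (supp f \<times> supp g)"
proof
  fix w assume "w \<in> supp (fmul f g)"
  then obtain p where "p \<in> splits w" "f (fst p) * g (snd p) \<noteq> 0"
    unfolding supp_def fmul_splits by (metis (mono_tags, lifting) mem_Collect_eq sum.neutral)
  thus "w \<in> (\<lambda>(u,v). u @ v) ` (supp f \<times> supp g)"
    unfolding supp_def splits_def by (auto intro!: image_eqI[of _ _ p])
qed

lemma finite_supp_fmul: "finite_supp f \<Longrightarrow> finite_supp g \<Longrightarrow> finite_supp (fmul f g)"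
  using supp_fmul finite_subset by (metis finite_SigmaI finite_imageI)

lemma finite_supp_add: "finite_supp f \<Longrightarrow> finite_supp g \<Longrightarrow> finite_supp (f + g)"
  by (rule finite_subset[of _ "supp f \<union> supp g"]) (auto simp: supp_def)

lemma finite_supp_smult: "finite_supp f \<Longrightarrow> finite_supp (fsmult a f)"
  by (rule finite_subset[of _ "supp f"]) (auto simp: supp_def fsmult_def)

lemma finite_supp_diff: "finite_supp f \<Longrightarrow> finite_supp g \<Longrightarrow> finite_supp (f - g)"
  unfolding fsmult_minus_one by (intro finite_supp_add finite_supp_smult)

lemma finite_supp_zero [simp]: "finite_supp 0"
  by (simp add: supp_def)

lemma finite_supp_gen [simp]: "finite_supp (gen x)"
  by (rule finite_subset[of _ "{[x]}"]) (auto simp: supp_def gen_def)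

lemma finite_supp_sum: "(\<And>i. i \<in> S \<Longrightarrow> finite_supp (F i)) \<Longrightarrow> finite_supp (\<Sum>i\<in>S. F i)"
  by (induction S rule: infinite_finite_induct) (auto intro: finite_supp_add)

lemma freealg_finite_supp: "x \<in> freealg L r d \<Longrightarrow> finite_supp x"
  unfolding freealg_def supp_def by auto

lemma freealg_fmul:
  assumes "f \<in> freealg L r d" "g \<in> freealg L r d"
  shows "fmul f g \<in> freealg L r d"
proof -
  have "w \<noteq> [] \<and> (\<forall>x\<in>set w. validgen L r d x)" if "fmul f g w \<noteq> 0" for w
  proof -
    have "w \<in> (\<lambda>(u,v). u @ v) ` (supp f \<times> supp g)" using supp_fmul that by (auto simp: supp_def)
    then obtain u v where "w = u @ v" "f u \<noteq> 0" "g v \<noteq> 0" by (auto simp: supp_def)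
    thus ?thesis using assms unfolding freealg_def by auto
  qed
  moreover have "finite_supp (fmul f g)"
    using finite_supp_fmul freealg_finite_supp assms by blast
  ultimately show ?thesis unfolding freealg_def supp_def by blast
qed

lemma freealg_gen: "validgen L r d x \<Longrightarrow> gen x \<in> freealg L r d"
  unfolding freealg_def gen_def by (auto intro: finite_subset[of _ "{[x]}"])

fun run :: "('g \<Rightarrow> 'x \<Rightarrow> 'x option) \<Rightarrow> 'g list \<Rightarrow> 'x \<Rightarrow> 'x option" where
  "run phi [] x = Some x"
| "run phi (g # w) x = Option.bind (phi g x) (run phi w)"

definition act :: "('g \<Rightarrow> 'x \<Rightarrow> 'x option) \<Rightarrow> 'g list \<Rightarrow> ('x \<Rightarrow> 'r::comm_ring_1) \<Rightarrow> 'x \<Rightarrow> 'r" where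
  "act phi w h x = (case run phi w x of None \<Rightarrow> 0 | Some y \<Rightarrow> h y)"

definition rep :: "('g \<Rightarrow> 'x \<Rightarrow> 'x option) \<Rightarrow> ('g list \<Rightarrow> 'r::comm_ring_1) \<Rightarrow> ('x \<Rightarrow> 'r) \<Rightarrow> 'x \<Rightarrow> 'r" where
  "rep phi f h x = (\<Sum>w\<in>supp f. f w * act phi w h x)"

lemma run_append: "run phi (u @ v) x = Option.bind (run phi u x) (run phi v)"
proof (induction u arbitrary: x)
  case (Cons a u) show ?case by (cases "phi a x") (simp_all add: Cons)
qed simp

lemma act_append: "act phi (u @ v) h x = act phi u (act phi v h) x"
  unfolding act_def run_append by (auto split: option.splits)

lemma act_lincomb: "act phi u (\<lambda>y. \<Sum>v\<in>G. a v * F v y) x = (\<Sum>v\<in>G. a v * act phi u (F v) x)"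
  unfolding act_def by (auto split: option.splits)

lemma rep_eq_sum_over:
  "finite T \<Longrightarrow> supp f \<subseteq> T \<Longrightarrow> rep phi f h x = (\<Sum>w\<in>T. f w * act phi w h x)"
  unfolding rep_def by (rule sum.mono_neutral_left) (auto simp: supp_def)

lemma sum_fmul_over_products:
  assumes "finite_supp f" "finite_supp g"
  shows "(\<Sum>w\<in>(\<lambda>(u,v). u @ v) ` (supp f \<times> supp g). fmul f g w * F w)
       = (\<Sum>q\<in>supp f \<times> supp g. f (fst q) * g (snd q) * F (fst q @ snd q))"
    (is "(\<Sum>w\<in>?T. _) = (\<Sum>q\<in>?P. _)")
proof -
  have fT: "finite ?T" using assms by auto
  have "(\<Sum>w\<in>?T. fmul f g w * F w) = (\<Sum>z\<in>Sigma ?T splits. f (fst (snd z)) * g (snd (snd z)) * F (fst z))"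
    unfolding fmul_splits sum_distrib_right by (subst sum.Sigma[OF fT]) (auto simp: split_def)
  also have "\<dots> = (\<Sum>z\<in>(\<lambda>q. (fst q @ snd q, q)) ` ?P. f (fst (snd z)) * g (snd (snd z)) * F (fst z))"
  proof (rule sum.mono_neutral_right)
    show "finite (Sigma ?T splits)" using fT by auto
    show "(\<lambda>q. (fst q @ snd q, q)) ` ?P \<subseteq> Sigma ?T splits"
      by (auto simp: splits_def)
    show "\<forall>z\<in>Sigma ?T splits - (\<lambda>q. (fst q @ snd q, q)) ` ?P.
        f (fst (snd z)) * g (snd (snd z)) * F (fst z) = 0"
    proof
      fix z assume z: "z \<in> Sigma ?T splits - (\<lambda>q. (fst q @ snd q, q)) ` ?P"
      then obtain w u v where zz: "z = (w, (u, v))" "u @ v = w" by (auto simp: splits_def)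
      have "\<not> (u \<in> supp f \<and> v \<in> supp g)" using z zz by (auto intro!: image_eqI[of _ _ "(u,v)"])
      thus "f (fst (snd z)) * g (snd (snd z)) * F (fst z) = 0"
        using zz by (auto simp: supp_def)
    qed
  qed
  also have "\<dots> = (\<Sum>q\<in>?P. f (fst q) * g (snd q) * F (fst q @ snd q))"
    by (subst sum.reindex) (auto simp: inj_on_def)
  finally show ?thesis .
qed

lemma rep_fmul:
  assumes "finite_supp f" "finite_supp g"
  shows "rep phi (fmul f g) h x = rep phi f (rep phi g h) x"
proof -
  have fT: "finite ((\<lambda>(u,v). u @ v) ` (supp f \<times> supp g))" using assms by auto
  have "rep phi f (rep phi g h) x
      = (\<Sum>u\<in>supp f. f u * (\<Sum>v\<in>supp g. g v * act phi u (act phi v h) x))"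
    unfolding rep_def act_lincomb ..
  also have "\<dots> = (\<Sum>q\<in>supp f \<times> supp g. f (fst q) * g (snd q) * act phi (fst q @ snd q) h x)"
    by (simp add: sum.cartesian_product sum_distrib_left mult.assoc act_append split_def)
  also have "\<dots> = rep phi (fmul f g) h x"
    unfolding rep_eq_sum_over[OF fT supp_fmul] sum_fmul_over_products[OF assms] ..
  finally show ?thesis ..
qed

lemma rep_add:
  assumes "finite_supp f" "finite_supp g"
  shows "rep phi (f + g) h x = rep phi f h x + rep phi g h x"
proof -
  let ?T = "supp f \<union> supp g"
  have "rep phi (f + g) h x = (\<Sum>w\<in>?T. (f + g) w * act phi w h x)"
    by (rule rep_eq_sum_over) (use assms in \<open>auto simp: supp_def\<close>)
  moreover have "rep phi f h x = (\<Sum>w\<in>?T. f w * act phi w h x)"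
    by (rule rep_eq_sum_over) (use assms in auto)
  moreover have "rep phi g h x = (\<Sum>w\<in>?T. g w * act phi w h x)"
    by (rule rep_eq_sum_over) (use assms in auto)
  ultimately show ?thesis by (simp add: sum.distrib algebra_simps)
qed

lemma rep_smult:
  assumes "finite_supp f"
  shows "rep phi (fsmult a f) h x = a * rep phi f h x"
proof -
  have "rep phi (fsmult a f) h x = (\<Sum>w\<in>supp f. fsmult a f w * act phi w h x)"
    by (rule rep_eq_sum_over) (use assms in \<open>auto simp: supp_def fsmult_def\<close>)
  thus ?thesis unfolding rep_def by (simp add: fsmult_def sum_distrib_left mult.assoc)
qed

lemma rep_diff:
  "finite_supp f \<Longrightarrow> finite_supp g \<Longrightarrow> rep phi (f - g) h x = rep phi f h x - rep phi g h x"
  unfolding fsmult_minus_one by (simp add: rep_add rep_smult finite_supp_smult)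

lemma rep_zero [simp]: "rep phi 0 h x = 0"
  by (simp add: rep_def supp_def)

lemma rep_sum:
  "(\<And>i. i \<in> S \<Longrightarrow> finite_supp (F i)) \<Longrightarrow> rep phi (\<Sum>i\<in>S. F i) h x = (\<Sum>i\<in>S. rep phi (F i) h x)"
  by (induction S rule: infinite_finite_induct) (simp_all add: rep_add finite_supp_sum)

lemma rep_gen: "rep phi (gen g) h x = (case phi g x of None \<Rightarrow> 0 | Some y \<Rightarrow> h y)"
proof -
  have "rep phi (gen g) h x = (\<Sum>w\<in>{[g]}. gen g w * act phi w h x)"
    by (rule rep_eq_sum_over) (auto simp: supp_def gen_def)
  thus ?thesis by (simp add: gen_def act_def split: option.splits)
qed

lemma rep_zero_fun: "rep phi f (\<lambda>y. 0) z = 0"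
  unfolding rep_def act_def by (auto intro!: sum.neutral split: option.splits)

lemma kp_ideal_rep_vanishes:
  fixes phi :: "'p kpgen \<Rightarrow> 'x \<Rightarrow> 'x option" and x :: "'p kpgen list \<Rightarrow> 'r::comm_ring_1"
  assumes "\<And>x :: 'p kpgen list \<Rightarrow> 'r. x \<in> kp_relators L r s c d \<Longrightarrow>
      finite_supp x \<and> (\<forall>h y. rep phi x h y = 0)"
    and "x \<in> kp_ideal L r s c d"
  shows "finite_supp x \<and> (\<forall>h y. rep phi x h y = 0)"
  using assms(2)
proof (induction rule: kp_ideal.induct)
  case (rel x) show ?case by (rule assms(1)[OF rel.hyps])
next
  case zero show ?case using finite_supp_zero rep_zero by metis
next
  case (add x y)
  have "rep phi (x + y) h z = 0" for h z using add rep_add[of x y phi h z] by auto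
  thus ?case using add finite_supp_add by blast
next
  case (smult x a)
  have "rep phi (fsmult a x) h z = 0" for h z using smult rep_smult[of x phi a h z] by auto
  thus ?case using smult finite_supp_smult by blast
next
  case (lmult x y)
  have "rep phi (fmul y x) h z = 0" for h z
  proof -
    have "rep phi x h = (\<lambda>y. 0)" using lmult by auto
    thus ?thesis using lmult freealg_finite_supp rep_fmul[of y x phi h z] rep_zero_fun by metis
  qed
  thus ?case using lmult finite_supp_fmul freealg_finite_supp by blast
next
  case (rmult x y)
  have "rep phi (fmul x y) h z = 0" for h z
    using rmult freealg_finite_supp rep_fmul[of x y phi h z] by auto
  thus ?case using rmult finite_supp_fmul freealg_finite_supp by blast
qed

lemma rep_diff_vanishes:
  assumes "finite_supp f" "finite_supp g" "\<And>h y. rep phi f h y = rep phi g h y"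
  shows "finite_supp (f - g) \<and> (\<forall>h y. rep phi (f - g) h y = 0)"
  using assms by (simp add: rep_diff finite_supp_diff)

lemma kp_eq_refl: "kp_eq L r s c d x x"
  unfolding kp_eq_def using kp_ideal.zero by simp

lemma kp_eq_sym:
  assumes "kp_eq L r s c d x y"
  shows "kp_eq L r s c d y x"
proof -
  have "fsmult (-1) (x - y) = y - x" by (simp add: fsmult_def fun_eq_iff)
  thus ?thesis using kp_ideal.smult[OF assms[unfolded kp_eq_def], of "-1"] unfolding kp_eq_def by simp
qed

lemma kp_eq_trans:
  assumes "kp_eq L r s c d x y" "kp_eq L r s c d y z"
  shows "kp_eq L r s c d x z"
proof -
  have e: "x - z = (x - y) + (y - z)" by simp
  show ?thesis using kp_ideal.add[OF assms[unfolded kp_eq_def]] unfolding kp_eq_def e .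
qed

lemma kp_eq_add:
  assumes "kp_eq L r s c d x y" "kp_eq L r s c d x' y'"
  shows "kp_eq L r s c d (x + x') (y + y')"
proof -
  have e: "(x + x') - (y + y') = (x - y) + (x' - y')" by (simp add: algebra_simps)
  show ?thesis using kp_ideal.add[OF assms[unfolded kp_eq_def]] unfolding kp_eq_def e .
qed

lemma kp_eq_sum:
  "(\<And>i. i \<in> S \<Longrightarrow> kp_eq L r s c d (F i) (G i)) \<Longrightarrow>
    kp_eq L r s c d (\<Sum>i\<in>S. F i) (\<Sum>i\<in>S. G i)"
proof (induction S rule: infinite_finite_induct)
  case (infinite A)
  show ?case unfolding sum.infinite[OF infinite.hyps] by (rule kp_eq_refl)
next
  case empty
  show ?case unfolding sum.empty by (rule kp_eq_refl)
next
  case (insert a S)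
  have "kp_eq L r s c d (F a + (\<Sum>i\<in>S. F i)) (G a + (\<Sum>i\<in>S. G i))"
    using insert.prems by (intro kp_eq_add insert.IH) auto
  thus ?case unfolding sum.insert[OF insert.hyps] .
qed

lemma kp_eq_lmult:
  "kp_eq L r s c d x y \<Longrightarrow> z \<in> freealg L r d \<Longrightarrow> kp_eq L r s c d (fmul z x) (fmul z y)"
  unfolding kp_eq_def fmul_diff_right[symmetric] by (rule kp_ideal.lmult)

lemma kp_eq_rmult:
  "kp_eq L r s c d x y \<Longrightarrow> z \<in> freealg L r d \<Longrightarrow> kp_eq L r s c d (fmul x z) (fmul y z)"
  unfolding kp_eq_def fmul_diff_left[symmetric] by (rule kp_ideal.rmult)

lemma kp_eq_mult:
  assumes "kp_eq L r s c d x x'" "kp_eq L r s c d y y'" "x' \<in> freealg L r d" "y \<in> freealg L r d"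
  shows "kp_eq L r s c d (fmul x y) (fmul x' y')"
  using kp_eq_trans[OF kp_eq_rmult[OF assms(1,4)] kp_eq_lmult[OF assms(2,3)]] .

lemma kp_eq_relator: "x - y \<in> kp_relators L r s c d \<Longrightarrow> kp_eq L r s c d x y"
  unfolding kp_eq_def by (rule kp_ideal.rel)

lemma le_add_fun: "(m::'k \<Rightarrow> nat) \<le> m + n"
  by (simp add: le_fun_def)

locale row_finite_kgraph =
  fixes L :: "'p set" and r s :: "'p \<Rightarrow> 'p" and c :: "'p \<Rightarrow> 'p \<Rightarrow> 'p"
    and d :: "'p \<Rightarrow> ('k::finite \<Rightarrow> nat)"
  assumes kg: "kgraph L r s c d"
    and rf: "row_finite_no_sources L r d"
begin

lemma vertex_laws:
  assumes "l \<in> L"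
  shows "r l \<in> L" "s l \<in> L" "r (r l) = r l" "s (r l) = r l" "r (s l) = s l" "s (s l) = s l"
    "c (r l) l = l" "c l (s l) = l" "d (r l) = 0" "d (s l) = 0"
  using kg assms unfolding kgraph_def by blast+

lemma comp_laws:
  assumes "l \<in> L" "m \<in> L" "s l = r m"
  shows "c l m \<in> L" "r (c l m) = r l" "s (c l m) = s m" "d (c l m) = d l + d m"
  using kg assms unfolding kgraph_def by blast+

lemma comp_assoc:
  assumes "l \<in> L" "m \<in> L" "n \<in> L" "s l = r m" "s m = r n"
  shows "c (c l m) n = c l (c m n)"
  using kg assms unfolding kgraph_def by blast

lemma unique_factorization:
  assumes "l \<in> L" "d l = m + n"
  shows "\<exists>!(a, b). a \<in> L \<and> b \<in> L \<and> s a = r b \<and> d a = m \<and> d b = n \<and> c a b = l"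
  using kg assms unfolding kgraph_def by blast

lemma obtain_factorization:
  assumes "l \<in> L" "d l = m + n"
  obtains a b where "a \<in> L" "b \<in> L" "s a = r b" "d a = m" "d b = n" "c a b = l"
  using unique_factorization[OF assms] by auto

lemma factorization_unique:
  assumes "a \<in> L" "b \<in> L" "a' \<in> L" "b' \<in> L" "s a = r b" "s a' = r b'"
    "d a = d a'" "c a b = c a' b'"
  shows "a = a' \<and> b = b'"
proof -
  have e1: "d (c a b) = d a + d b" using comp_laws assms by blast
  have e2: "d (c a' b') = d a' + d b'" using comp_laws assms by blast
  have "d b = d b'" using e1 e2 assms by (metis add_left_cancel)
  have "c a b \<in> L" using comp_laws assms by blast
  from unique_factorization[OF this e1] assms \<open>d b = d b'\<close> show ?thesis by auto
qed

lemma deg0_vertex: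
  assumes "l \<in> L" "d l = 0"
  shows "r l = l" "s l = l"
proof -
  have "d l = 0 + 0" using assms by simp
  have "r l = l \<and> l = s l"
    using factorization_unique[of "r l" l l "s l"] vertex_laws[OF assms(1)] assms by auto
  thus "r l = l" "s l = l" by auto
qed

definition is_prefix :: "'p \<Rightarrow> 'p \<Rightarrow> bool" where
  "is_prefix a l \<longleftrightarrow> a \<in> L \<and> (\<exists>b\<in>L. s a = r b \<and> c a b = l)"

lemma is_prefix_refl: "l \<in> L \<Longrightarrow> is_prefix l l"
  unfolding is_prefix_def using vertex_laws by metis

lemma is_prefix_comp: "l \<in> L \<Longrightarrow> m \<in> L \<Longrightarrow> s l = r m \<Longrightarrow> is_prefix l (c l m)"
  unfolding is_prefix_def by blast

lemma is_prefix_unique: "is_prefix a l \<Longrightarrow> is_prefix a' l \<Longrightarrow> d a = d a' \<Longrightarrow> a = a'"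
  unfolding is_prefix_def using factorization_unique by metis

lemma is_prefix_trans:
  assumes "is_prefix a b" "is_prefix b l"
  shows "is_prefix a l"
proof -
  obtain e where e: "e \<in> L" "s a = r e" "c a e = b" "a \<in> L" using assms(1) is_prefix_def by auto
  obtain f where f: "f \<in> L" "s b = r f" "c b f = l" using assms(2) is_prefix_def by auto
  have "s e = r f" using f e comp_laws by metis
  hence "c a (c e f) = l" using comp_assoc e f by metis
  moreover have "c e f \<in> L" "r (c e f) = r e" using comp_laws \<open>s e = r f\<close> e f by auto
  ultimately show ?thesis unfolding is_prefix_def using e by metis
qed

lemma obtain_prefix:
  assumes "l \<in> L" "d l = m + n"
  obtains a where "is_prefix a l" "d a = m"
  using obtain_factorization[OF assms] is_prefix_def by metis

lemma obtain_prefix_le: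
  assumes "l \<in> L" "m \<le> d l"
  obtains a where "is_prefix a l" "d a = m"
proof -
  have "d l = m + (d l - m)" using assms(2) by (simp add: le_fun_def fun_eq_iff)
  thus ?thesis using obtain_prefix[OF assms(1)] that by blast
qed

lemma is_prefix_mono:
  assumes "is_prefix a l" "is_prefix a' l" "d a \<le> d a'"
  shows "is_prefix a a'"
proof -
  have "a' \<in> L" using assms(2) is_prefix_def by auto
  then obtain a'' where a'': "is_prefix a'' a'" "d a'' = d a" using obtain_prefix_le assms(3) by metis
  hence "is_prefix a'' l" using is_prefix_trans assms(2) by blast
  hence "a'' = a" using is_prefix_unique assms(1) a'' by auto
  thus ?thesis using a'' by simp
qed

lemma is_prefix_range: "is_prefix a l \<Longrightarrow> r l = r a"
  unfolding is_prefix_def using comp_laws by metis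

definition prefix_of_degree :: "('k \<Rightarrow> nat) \<Rightarrow> 'p \<Rightarrow> 'p" where
  "prefix_of_degree n l = (THE a. is_prefix a l \<and> d a = n)"

lemma prefix_of_degree:
  assumes "l \<in> L" "n \<le> d l"
  shows "is_prefix (prefix_of_degree n l) l" "d (prefix_of_degree n l) = n"
proof -
  obtain a where "is_prefix a l" "d a = n" using obtain_prefix_le[OF assms] .
  hence "\<exists>!a. is_prefix a l \<and> d a = n" using is_prefix_unique by blast
  hence "is_prefix (prefix_of_degree n l) l \<and> d (prefix_of_degree n l) = n"
    unfolding prefix_of_degree_def by (rule theI')
  thus "is_prefix (prefix_of_degree n l) l" "d (prefix_of_degree n l) = n" by auto
qed

definition path_tail :: "'p \<Rightarrow> 'p \<Rightarrow> 'p" where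
  "path_tail a l = (THE b. b \<in> L \<and> s a = r b \<and> c a b = l)"

lemma path_tail:
  assumes "is_prefix a l"
  shows "path_tail a l \<in> L" "s a = r (path_tail a l)" "c a (path_tail a l) = l"
proof -
  have "a \<in> L" "\<exists>b. b \<in> L \<and> s a = r b \<and> c a b = l" using assms is_prefix_def by auto
  hence "\<exists>!b. b \<in> L \<and> s a = r b \<and> c a b = l" using factorization_unique by metis
  hence "path_tail a l \<in> L \<and> s a = r (path_tail a l) \<and> c a (path_tail a l) = l"
    unfolding path_tail_def by (rule theI')
  thus "path_tail a l \<in> L" "s a = r (path_tail a l)" "c a (path_tail a l) = l" by auto
qed

lemma path_tail_comp: "a \<in> L \<Longrightarrow> b \<in> L \<Longrightarrow> s a = r b \<Longrightarrow> path_tail a (c a b) = b"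
  using path_tail[OF is_prefix_comp] factorization_unique comp_laws by metis

lemma path_tail_deg: "is_prefix a l \<Longrightarrow> d l = d a + d (path_tail a l)"
  using path_tail comp_laws is_prefix_def by metis

lemma path_tail_trans:
  assumes "is_prefix a l" "is_prefix l l'"
  shows "s (path_tail a l) = r (path_tail l l')"
    and "path_tail a l' = c (path_tail a l) (path_tail l l')"
proof -
  let ?b = "path_tail a l" and ?e = "path_tail l l'"
  have a: "a \<in> L" using assms(1) is_prefix_def by auto
  have b: "?b \<in> L" "s a = r ?b" "c a ?b = l" using path_tail[OF assms(1)] by auto
  have e: "?e \<in> L" "s l = r ?e" "c l ?e = l'" using path_tail[OF assms(2)] by auto
  show se: "s ?b = r ?e" using b e comp_laws a by metis
  have "l' = c a (c ?b ?e)" using comp_assoc[OF a b(1) e(1) b(2) se] b e by metis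
  moreover have "c ?b ?e \<in> L" "r (c ?b ?e) = r ?b" using comp_laws[OF b(1) e(1) se] by auto
  ultimately show "path_tail a l' = c ?b ?e" using path_tail_comp a b by metis
qed

lemma is_prefix_path_tail:
  assumes "is_prefix a l" "is_prefix l l'"
  shows "is_prefix (path_tail a l) (path_tail a l')"
  using path_tail_trans[OF assms] is_prefix_comp path_tail[OF assms(1)] path_tail[OF assms(2)]
  by metis

lemma source_in_vertices: "l \<in> L \<Longrightarrow> s l \<in> vertices L r"
  unfolding vertices_def using vertex_laws by (metis image_eqI)

section \<open>Infinite paths\<close>

text \<open>An infinite path \<open>x : \<Omega>\<^sub>k \<rightarrow> \<Lambda>\<close> is determined by its initial segments \<open>x(0, n)\<close>;
  here \<open>x n\<close> stands for \<open>x(0, n)\<close>.\<close>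

definition inf_paths :: "(('k \<Rightarrow> nat) \<Rightarrow> 'p) set" where
  "inf_paths = {x. (\<forall>n. x n \<in> L \<and> d (x n) = n) \<and> (\<forall>n m. n \<le> m \<longrightarrow> is_prefix (x n) (x m))}"

lemma inf_path_in_L: "x \<in> inf_paths \<Longrightarrow> x n \<in> L"
  and inf_path_deg: "x \<in> inf_paths \<Longrightarrow> d (x n) = n"
  and inf_path_prefix: "x \<in> inf_paths \<Longrightarrow> n \<le> m \<Longrightarrow> is_prefix (x n) (x m)"
  unfolding inf_paths_def by auto

lemma inf_path_base_vertex: "x \<in> inf_paths \<Longrightarrow> r (x 0) = x 0 \<and> s (x 0) = x 0"
  using deg0_vertex inf_path_in_L inf_path_deg by metis

lemma inf_path_range:
  assumes "x \<in> inf_paths"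
  shows "r (x n) = x 0"
proof -
  have "is_prefix (x 0) (x n)" using inf_path_prefix[OF assms] by (simp add: le_fun_def)
  thus ?thesis using is_prefix_range inf_path_base_vertex[OF assms] by metis
qed

lemma inf_path_eq_prefix:
  "x \<in> inf_paths \<Longrightarrow> is_prefix a (x n) \<Longrightarrow> d a \<le> n \<Longrightarrow> x (d a) = a"
  using inf_path_prefix is_prefix_unique inf_path_deg by (metis is_prefix_mono)

definition shift :: "('k \<Rightarrow> nat) \<Rightarrow> (('k \<Rightarrow> nat) \<Rightarrow> 'p) \<Rightarrow> ('k \<Rightarrow> nat) \<Rightarrow> 'p" where
  "shift m x = (\<lambda>n. path_tail (x m) (x (m + n)))"

lemma shift_inf_path:
  assumes "x \<in> inf_paths"
  shows "shift m x \<in> inf_paths"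
proof -
  have P: "\<And>n. is_prefix (x m) (x (m + n))" using inf_path_prefix[OF assms] le_add_fun by blast
  have "d (shift m x n) = n" for n
    using path_tail_deg[OF P, of n] inf_path_deg[OF assms] unfolding shift_def
    by (metis add_left_cancel)
  moreover have "shift m x n \<in> L" for n unfolding shift_def using path_tail(1)[OF P] .
  moreover have "is_prefix (shift m x n) (shift m x n')" if "n \<le> n'" for n n'
  proof -
    have "m + n \<le> m + n'" using that by (simp add: le_fun_def)
    thus ?thesis unfolding shift_def
      using is_prefix_path_tail[OF P inf_path_prefix[OF assms]] by blast
  qed
  ultimately show ?thesis unfolding inf_paths_def by blast
qed

lemma shift_at0:
  assumes "x \<in> inf_paths"
  shows "shift m x 0 = s (x m)"
proof -
  have "c (x m) (s (x m)) = x m" "s (x m) \<in> L" "r (s (x m)) = s (x m)"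
    using vertex_laws inf_path_in_L[OF assms] by auto
  thus ?thesis unfolding shift_def using path_tail_comp inf_path_in_L[OF assms] by (metis add_0_right)
qed

lemma shift_zero:
  assumes "x \<in> inf_paths"
  shows "shift 0 x = x"
proof
  fix n
  have "c (x 0) (x n) = x n" using inf_path_range[OF assms] vertex_laws inf_path_in_L[OF assms] by metis
  moreover have "s (x 0) = r (x n)" using inf_path_range[OF assms] inf_path_base_vertex[OF assms] by metis
  ultimately show "shift 0 x n = x n"
    unfolding shift_def using path_tail_comp inf_path_in_L[OF assms] by (metis add_0)
qed

lemma shift_shift:
  assumes "x \<in> inf_paths"
  shows "shift n (shift m x) = shift (m + n) x"
proof
  fix j
  have P: "is_prefix (x m) (x (m + n))" and P': "is_prefix (x (m + n)) (x (m + n + j))"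
    using inf_path_prefix[OF assms] le_add_fun by blast+
  have "shift m x (n + j) = c (shift m x n) (shift (m + n) x j)"
    unfolding shift_def using path_tail_trans(2)[OF P P'] by (simp add: add.assoc)
  thus "shift n (shift m x) j = shift (m + n) x j"
    unfolding shift_def[of n]
    using path_tail_comp path_tail(1)[OF P] path_tail(1)[OF P'] path_tail_trans(1)[OF P P']
    unfolding shift_def by metis
qed

definition prepend :: "'p \<Rightarrow> (('k \<Rightarrow> nat) \<Rightarrow> 'p) \<Rightarrow> ('k \<Rightarrow> nat) \<Rightarrow> 'p" where
  "prepend l x = (\<lambda>n. prefix_of_degree n (c l (x n)))"

lemma comp_inf_path:
  assumes "l \<in> L" "x \<in> inf_paths" "x 0 = s l"
  shows "s l = r (x n)" "c l (x n) \<in> L" "d (c l (x n)) = d l + n"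
  using inf_path_range[OF assms(2)] assms(3) comp_laws[OF assms(1) inf_path_in_L[OF assms(2)]]
    inf_path_deg[OF assms(2)] by auto

lemma prepend_spec:
  assumes "l \<in> L" "x \<in> inf_paths" "x 0 = s l"
  shows "is_prefix (prepend l x n) (c l (x n))" "d (prepend l x n) = n"
proof -
  have "n \<le> d (c l (x n))" using comp_inf_path[OF assms] by (simp add: le_fun_def)
  thus "is_prefix (prepend l x n) (c l (x n))" "d (prepend l x n) = n"
    unfolding prepend_def using prefix_of_degree comp_inf_path[OF assms] by auto
qed

lemma comp_prefix_mono:
  assumes "l \<in> L" "x \<in> inf_paths" "x 0 = s l" "n \<le> n'"
  shows "is_prefix (c l (x n)) (c l (x n'))"
proof -
  obtain e where e: "e \<in> L" "s (x n) = r e" "c (x n) e = x n'"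
    using inf_path_prefix[OF assms(2,4)] is_prefix_def by auto
  note ln = comp_inf_path[OF assms(1-3), of n]
  have "c l (x n') = c (c l (x n)) e"
    using comp_assoc[of l "x n" e] e ln assms(1) inf_path_in_L[OF assms(2)] by metis
  moreover have "s (c l (x n)) = r e" using comp_laws[OF assms(1) inf_path_in_L[OF assms(2)]] ln e by auto
  ultimately show ?thesis using is_prefix_comp e ln by metis
qed

lemma prepend_eqI:
  assumes "l \<in> L" "x \<in> inf_paths" "x 0 = s l" "n \<le> n'" "is_prefix a (c l (x n'))" "d a = n"
  shows "prepend l x n = a"
  using prepend_spec[OF assms(1-3), of n] comp_prefix_mono[OF assms(1-4)] is_prefix_trans
    is_prefix_unique assms(5,6) by metis

lemma prepend_inf_path:
  assumes "l \<in> L" "x \<in> inf_paths" "x 0 = s l"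
  shows "prepend l x \<in> inf_paths"
proof -
  have A: "\<And>n. prepend l x n \<in> L \<and> d (prepend l x n) = n"
    using prepend_spec[OF assms] is_prefix_def by auto
  have B: "is_prefix (prepend l x n) (prepend l x n')" if "n \<le> n'" for n n'
  proof -
    have "is_prefix (prepend l x n) (c l (x n'))"
      using prepend_spec[OF assms, of n] comp_prefix_mono[OF assms that] is_prefix_trans by blast
    thus ?thesis using is_prefix_mono prepend_spec[OF assms, of n'] A that by metis
  qed
  show ?thesis unfolding inf_paths_def using A B by blast
qed

lemma prepend_at:
  assumes "l \<in> L" "x \<in> inf_paths" "x 0 = s l"
  shows "prepend l x (d l) = l"
  using prepend_eqI[OF assms order_refl is_prefix_comp[OF assms(1) inf_path_in_L[OF assms(2)]]]
    comp_inf_path[OF assms] by simp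

lemma prepend_at0:
  assumes "l \<in> L" "x \<in> inf_paths" "x 0 = s l"
  shows "prepend l x 0 = r l"
  using inf_path_range[OF prepend_inf_path[OF assms], of "d l"] prepend_at[OF assms] by simp

lemma shift_prepend:
  assumes "l \<in> L" "x \<in> inf_paths" "x 0 = s l"
  shows "shift (d l) (prepend l x) = x"
proof
  fix n
  note ln = comp_inf_path[OF assms, of n]
  have "prepend l x (d l + n) = c l (x n)"
    using prepend_eqI[OF assms order_refl comp_prefix_mono[OF assms, of n "d l + n"]] ln
    by (metis le_add_fun add.commute)
  thus "shift (d l) (prepend l x) n = x n"
    unfolding shift_def using prepend_at[OF assms] path_tail_comp assms(1) inf_path_in_L[OF assms(2)] ln
    by metis
qed

lemma prepend_shift:
  assumes "x \<in> inf_paths" "l \<in> L" "x (d l) = l"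
  shows "prepend l (shift (d l) x) = x"
proof
  fix n
  let ?y = "shift (d l) x"
  have y: "?y \<in> inf_paths" "?y 0 = s l" using shift_inf_path shift_at0 assms by auto
  have P: "is_prefix (x (d l)) (x (d l + n))" using inf_path_prefix[OF assms(1)] le_add_fun by blast
  have "c l (?y n) = x (d l + n)" unfolding shift_def using path_tail(3)[OF P] assms(3) by simp
  moreover have "is_prefix (x n) (x (d l + n))"
    using inf_path_prefix[OF assms(1)] by (metis le_add_fun add.commute)
  ultimately show "prepend l ?y n = x n"
    using prepend_eqI[OF assms(2) y order_refl] inf_path_deg[OF assms(1)] by metis
qed

lemma inf_path_through_comp_iff:
  assumes "x \<in> inf_paths" "l \<in> L" "m \<in> L" "s l = r m"
  shows "x (d (c l m)) = c l m \<longleftrightarrow> x (d l) = l \<and> shift (d l) x (d m) = m"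
proof
  have dc: "d (c l m) = d l + d m" using comp_laws assms by auto
  have P: "is_prefix (x (d l)) (x (d l + d m))" using inf_path_prefix[OF assms(1)] le_add_fun by blast
  {
    assume h: "x (d (c l m)) = c l m"
    have "is_prefix l (x (d (c l m)))" using h is_prefix_comp[OF assms(2-4)] by simp
    hence "x (d l) = l" using inf_path_eq_prefix[OF assms(1)] dc le_add_fun by metis
    moreover have "shift (d l) x (d m) = m"
      unfolding shift_def using h dc \<open>x (d l) = l\<close> path_tail_comp assms by metis
    ultimately show "x (d l) = l \<and> shift (d l) x (d m) = m" by simp
  next
    assume "x (d l) = l \<and> shift (d l) x (d m) = m"
    thus "x (d (c l m)) = c l m" using path_tail(3)[OF P] dc unfolding shift_def by metis
  }
qed

lemma prepend_prepend:
  assumes "l \<in> L" "m \<in> L" "s l = r m" "x \<in> inf_paths" "x 0 = s m"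
  shows "prepend l (prepend m x) = prepend (c l m) x"
proof -
  let ?y = "prepend m x" let ?z = "prepend l ?y"
  have y: "?y \<in> inf_paths" "?y 0 = s l" using prepend_inf_path prepend_at0 assms by auto
  have z: "?z \<in> inf_paths" "?z (d l) = l" "shift (d l) ?z = ?y"
    using prepend_inf_path[OF assms(1) y] prepend_at[OF assms(1) y] shift_prepend[OF assms(1) y] by auto
  have "?z (d (c l m)) = c l m"
    using inf_path_through_comp_iff[OF z(1) assms(1-3)] z prepend_at[OF assms(2,4,5)] by simp
  moreover have "shift (d (c l m)) ?z = x"
    using comp_laws(4)[OF assms(1-3)] shift_shift[OF z(1)] z(3) shift_prepend[OF assms(2,4,5)] by metis
  moreover have "c l m \<in> L" using comp_laws assms by auto
  ultimately show ?thesis using prepend_shift[OF z(1)] by metis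
qed

lemma prepend_vertex:
  assumes "x \<in> inf_paths" "v \<in> L" "d v = 0" "x 0 = v"
  shows "prepend v x = x"
  using prepend_shift[OF assms(1,2)] assms shift_zero by simp

lemma obtain_ray:
  assumes "lam \<in> L"
  obtains q :: "nat \<Rightarrow> 'p" where "q 0 = lam" "\<And>j. q j \<in> L" "\<And>j. d (q j) = d lam + (\<lambda>_. j)"
    "\<And>i j. i \<le> j \<Longrightarrow> is_prefix (q i) (q j)"
proof -
  have "\<forall>w\<in>vertices L r. \<exists>e. e \<in> vLn L r d w (\<lambda>_. 1)"
    using rf unfolding row_finite_no_sources_def by blast
  then obtain e where e: "\<And>w. w \<in> vertices L r \<Longrightarrow> e w \<in> vLn L r d w (\<lambda>_. 1)" by metis
  hence e': "e (s l) \<in> L" "r (e (s l)) = s l" "d (e (s l)) = (\<lambda>_. 1)" if "l \<in> L" for l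
    using source_in_vertices[OF that] unfolding vLn_def by auto
  define q where "q = rec_nat lam (\<lambda>j p. c p (e (s p)))"
  have q0: "q 0 = lam" and qS: "\<And>j. q (Suc j) = c (q j) (e (s (q j)))" unfolding q_def by auto
  have qL: "q j \<in> L \<and> d (q j) = d lam + (\<lambda>_. j)" for j
  proof (induction j)
    case 0 thus ?case using q0 assms by (simp add: fun_eq_iff)
  next
    case (Suc j)
    thus ?case using comp_laws[of "q j" "e (s (q j))"] e'[of "q j"] qS by (auto simp: fun_eq_iff)
  qed
  have "is_prefix (q i) (q (i + j))" for i j
  proof (induction j)
    case 0 thus ?case using is_prefix_refl qL by simp
  next
    case (Suc j)
    have "is_prefix (q (i + j)) (q (i + Suc j))" using is_prefix_comp qL e' qS by simp
    thus ?case using Suc is_prefix_trans by blast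
  qed
  hence "i \<le> j \<Longrightarrow> is_prefix (q i) (q j)" for i j using le_Suc_ex by metis
  thus ?thesis using that q0 qL by blast
qed

lemma inf_path_through:
  assumes "lam \<in> L"
  shows "\<exists>x\<in>inf_paths. x (d lam) = lam"
proof -
  obtain q where q: "q 0 = lam" "\<And>j. q j \<in> L" "\<And>j. d (q j) = d lam + (\<lambda>_. j)"
    "\<And>i j. i \<le> j \<Longrightarrow> is_prefix (q i) (q j)"
    using obtain_ray[OF assms] by blast
  define N where "N = (\<lambda>n::'k\<Rightarrow>nat. \<Sum>i\<in>UNIV. n i)"
  have N_le: "n \<le> d (q (N n))" for n
    using q(3) unfolding N_def le_fun_def by (simp add: member_le_sum trans_le_add2)
  have N_mono: "n \<le> n' \<Longrightarrow> N n \<le> N n'" for n n' unfolding N_def le_fun_def by (simp add: sum_mono)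
  define x where "x = (\<lambda>n. prefix_of_degree n (q (N n)))"
  have x: "is_prefix (x n) (q (N n))" "d (x n) = n" for n
    unfolding x_def using prefix_of_degree[OF q(2) N_le] by auto
  have "x \<in> inf_paths" unfolding inf_paths_def
  proof (intro CollectI conjI allI impI)
    fix n show "x n \<in> L" using x is_prefix_def by auto
    show "d (x n) = n" using x by auto
  next
    fix n m :: "'k \<Rightarrow> nat" assume "n \<le> m"
    hence "is_prefix (x n) (q (N m))" using x q(4) N_mono is_prefix_trans by blast
    thus "is_prefix (x n) (x m)" using x is_prefix_mono \<open>n \<le> m\<close> by metis
  qed
  moreover have "x (d lam) = lam" using x q(1,4) is_prefix_unique by (metis zero_le)
  ultimately show ?thesis by blast
qed

section \<open>The infinite-path representation\<close>

abbreviation proj :: "'p \<Rightarrow> 'p kpgen list \<Rightarrow> 'r::comm_ring_1" where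
  "proj l \<equiv> fmul (sp d l) (sst d l)"

text \<open>On functions \<open>h : \<Lambda>\<^sup>\<infinity> \<rightarrow> R\<close>,
  \<open>(s\<^sub>\<lambda> h) x = h (\<sigma>\<^bsup>d(\<lambda>)\<^esup> x)\<close> for \<open>x \<in> Z(\<lambda>)\<close> and \<open>(s\<^sub>\<lambda>\<^sup>* h) x = h (\<lambda> x)\<close> for \<open>r(x) = s(\<lambda>)\<close>,
  both 0 elsewhere; hence \<open>s\<^sub>\<lambda> s\<^sub>\<lambda>\<^sup>*\<close> is multiplication by the indicator of \<open>Z(\<lambda>)\<close>.\<close>

definition path_action :: "'p kpgen \<Rightarrow> (('k \<Rightarrow> nat) \<Rightarrow> 'p) \<Rightarrow> (('k \<Rightarrow> nat) \<Rightarrow> 'p) option" where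
  "path_action g x = (case g of
      Pg v \<Rightarrow> if x \<in> inf_paths \<and> x 0 = v then Some x else None
    | Sg l \<Rightarrow> if x \<in> inf_paths \<and> x (d l) = l then Some (shift (d l) x) else None
    | Stg l \<Rightarrow> if x \<in> inf_paths \<and> x 0 = s l then Some (prepend l x) else None)"

lemma finite_supp_pv [simp]: "finite_supp (pv v)"
  and finite_supp_sp [simp]: "finite_supp (sp d l)"
  and finite_supp_sst [simp]: "finite_supp (sst d l)"
  unfolding pv_def sp_def sst_def by auto

lemma rep_pv: "rep path_action (pv v) h x = (if x \<in> inf_paths \<and> x 0 = v then h x else 0)"
  by (simp add: pv_def rep_gen path_action_def)

lemma rep_sp:
  assumes "l \<in> L"
  shows "rep path_action (sp d l) h x =
    (if x \<in> inf_paths \<and> x (d l) = l then h (shift (d l) x) else 0)"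
  using shift_zero by (auto simp: sp_def rep_gen path_action_def)

lemma rep_sst:
  assumes "l \<in> L"
  shows "rep path_action (sst d l) h x = (if x \<in> inf_paths \<and> x 0 = s l then h (prepend l x) else 0)"
  using deg0_vertex[OF assms] prepend_vertex[OF _ assms]
  by (auto simp: sst_def rep_gen path_action_def)

lemma rep_proj:
  assumes "l \<in> L"
  shows "rep path_action (proj l) h x = (if x \<in> inf_paths \<and> x (d l) = l then h x else 0)"
proof -
  have "rep path_action (proj l) h x = rep path_action (sp d l) (rep path_action (sst d l) h) x"
    by (rule rep_fmul) auto
  also have "\<dots> = (if x \<in> inf_paths \<and> x (d l) = l then h x else 0)"
    unfolding rep_sp[OF assms] rep_sst[OF assms]
    using shift_inf_path shift_at0 prepend_shift assms by auto
  finally show ?thesis .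
qed

lemma rep_sum_proj_vLn:
  assumes "v \<in> vertices L r"
  shows "rep path_action (\<Sum>l\<in>vLn L r d v n. proj l) h y = rep path_action (pv v) h y"
proof -
  have fin: "finite (vLn L r d v n)" using rf assms unfolding row_finite_no_sources_def by blast
  have "rep path_action (\<Sum>l\<in>vLn L r d v n. proj l) h y
      = (\<Sum>l\<in>vLn L r d v n. rep path_action (proj l) h y)"
    by (rule rep_sum) (auto intro: finite_supp_fmul)
  also have "\<dots> = (\<Sum>l\<in>vLn L r d v n. if l = y n then (if y \<in> inf_paths then h y else 0) else 0)"
    by (rule sum.cong) (auto simp: rep_proj vLn_def inf_path_deg)
  also have "\<dots> = (if y n \<in> vLn L r d v n then (if y \<in> inf_paths then h y else 0) else 0)"
    by (rule sum.delta[OF fin])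
  also have "\<dots> = rep path_action (pv v) h y"
    unfolding rep_pv vLn_def using inf_path_in_L inf_path_deg inf_path_range by auto
  finally show ?thesis .
qed

lemma rep_kp_relator:
  assumes "x \<in> kp_relators L r s c d"
  shows "finite_supp x \<and> (\<forall>h y. rep path_action x h y = 0)"
  using assms unfolding kp_relators_def
proof (elim UnE CollectE exE conjE)
  fix v w assume "x = fmul (pv v) (pv w) - (if v = w then pv v else 0)"
  thus ?thesis by (auto simp: rep_diff finite_supp_diff finite_supp_fmul rep_fmul rep_pv)
next
  fix l m assume x: "x = fmul (sp d l) (sp d m) - sp d (c l m)" and lm: "l \<in> L" "m \<in> L" "r m = s l"
  have cL: "c l m \<in> L" "d (c l m) = d l + d m" using comp_laws lm by auto
  show ?thesis unfolding x
    by (intro rep_diff_vanishes finite_supp_fmul finite_supp_sp)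
      (use inf_path_through_comp_iff[OF _ lm(1,2)] lm(3) shift_inf_path shift_shift cL(2) in
        \<open>auto simp: rep_fmul rep_sp[OF lm(1)] rep_sp[OF lm(2)] rep_sp[OF cL(1)]\<close>)
next
  fix l m assume x: "x = fmul (sst d m) (sst d l) - sst d (c l m)" and lm: "l \<in> L" "m \<in> L" "r m = s l"
  have cL: "c l m \<in> L" "s (c l m) = s m" using comp_laws lm by auto
  show ?thesis unfolding x
    by (intro rep_diff_vanishes finite_supp_fmul finite_supp_sst)
      (use prepend_inf_path[OF lm(2)] prepend_at0[OF lm(2)] prepend_prepend[OF lm(1,2)] lm(3) cL(2) in
        \<open>auto simp: rep_fmul rep_sst[OF lm(1)] rep_sst[OF lm(2)] rep_sst[OF cL(1)]\<close>)
next
  fix l assume x: "x = fmul (pv (r l)) (sp d l) - sp d l" and l: "l \<in> L"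
  have "y \<in> inf_paths \<Longrightarrow> y (d l) = l \<Longrightarrow> y 0 = r l" for y using inf_path_range by metis
  thus ?thesis unfolding x
    by (intro rep_diff_vanishes finite_supp_fmul finite_supp_pv finite_supp_sp)
      (auto simp: rep_fmul rep_pv rep_sp[OF l])
next
  fix l assume x: "x = fmul (sp d l) (pv (s l)) - sp d l" and l: "l \<in> L"
  show ?thesis unfolding x
    by (intro rep_diff_vanishes finite_supp_fmul finite_supp_pv finite_supp_sp)
      (use shift_inf_path shift_at0 in \<open>auto simp: rep_fmul rep_pv rep_sp[OF l]\<close>)
next
  fix l assume x: "x = fmul (pv (s l)) (sst d l) - sst d l" and l: "l \<in> L"
  show ?thesis unfolding x
    by (intro rep_diff_vanishes finite_supp_fmul finite_supp_pv finite_supp_sst)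
      (auto simp: rep_fmul rep_pv rep_sst[OF l])
next
  fix l assume x: "x = fmul (sst d l) (pv (r l)) - sst d l" and l: "l \<in> L"
  show ?thesis unfolding x
    by (intro rep_diff_vanishes finite_supp_fmul finite_supp_pv finite_supp_sst)
      (use prepend_inf_path[OF l] prepend_at0[OF l] in \<open>auto simp: rep_fmul rep_pv rep_sst[OF l]\<close>)
next
  fix l m assume x: "x = fmul (sst d l) (sp d m) - (if l = m then pv (s l) else 0)"
    and lm: "l \<in> L" "m \<in> L" "d l = d m"
  show ?thesis unfolding x
    by (intro rep_diff_vanishes finite_supp_fmul finite_supp_sp finite_supp_sst)
      (use prepend_inf_path[OF lm(1)] prepend_at[OF lm(1)] shift_prepend[OF lm(1)] lm(3) in
        \<open>auto simp: rep_fmul rep_pv rep_sst[OF lm(1)] rep_sp[OF lm(2)]\<close>)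
next
  fix v n assume x: "x = pv v - (\<Sum>l\<in>vLn L r d v n. proj l)" and v: "v \<in> vertices L r"
  show ?thesis unfolding x
    by (intro rep_diff_vanishes finite_supp_pv finite_supp_sum finite_supp_fmul finite_supp_sp
        finite_supp_sst) (simp add: rep_sum_proj_vLn[OF v])
qed

lemma rep_kp_eq:
  assumes "kp_eq L r s c d x y" "finite_supp x" "finite_supp y"
  shows "rep path_action x h z = rep path_action y h z"
proof -
  have "rep path_action (x - y) h z = 0"
    using kp_ideal_rep_vanishes[of L r s c d path_action] rep_kp_relator assms(1)
    unfolding kp_eq_def by blast
  thus ?thesis using rep_diff[OF assms(2,3), of path_action h z] by simp
qed

section \<open>Expanding range projections by (KP4)\<close>

lemma deg0_in_vertices: "l \<in> L \<Longrightarrow> d l = 0 \<Longrightarrow> l \<in> vertices L r"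
  using deg0_vertex unfolding vertices_def by (metis image_eqI)

lemma freealg_sp: "l \<in> L \<Longrightarrow> sp d l \<in> freealg L r d"
  and freealg_sst: "l \<in> L \<Longrightarrow> sst d l \<in> freealg L r d"
  using deg0_in_vertices unfolding sp_def sst_def
  by (auto intro!: freealg_gen simp: validgen_def)

lemma kp_eq_kp1: "v \<in> vertices L r \<Longrightarrow> kp_eq L r s c d (fmul (pv v) (pv v)) (pv v)"
  by (rule kp_eq_relator) (auto simp: kp_relators_def)

lemma kp_eq_kp2_sp:
  "l \<in> L \<Longrightarrow> m \<in> L \<Longrightarrow> d l \<noteq> 0 \<Longrightarrow> d m \<noteq> 0 \<Longrightarrow> r m = s l \<Longrightarrow>
    kp_eq L r s c d (fmul (sp d l) (sp d m)) (sp d (c l m))"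
  by (rule kp_eq_relator) (unfold kp_relators_def, blast)

lemma kp_eq_kp2_sst:
  "l \<in> L \<Longrightarrow> m \<in> L \<Longrightarrow> d l \<noteq> 0 \<Longrightarrow> d m \<noteq> 0 \<Longrightarrow> r m = s l \<Longrightarrow>
    kp_eq L r s c d (fmul (sst d m) (sst d l)) (sst d (c l m))"
  by (rule kp_eq_relator) (unfold kp_relators_def, blast)

lemma kp_eq_kp2_source:
  "l \<in> L \<Longrightarrow> d l \<noteq> 0 \<Longrightarrow> kp_eq L r s c d (fmul (sp d l) (pv (s l))) (sp d l)"
  by (rule kp_eq_relator) (unfold kp_relators_def, blast)

lemma kp_eq_kp4:
  "v \<in> vertices L r \<Longrightarrow> n \<noteq> 0 \<Longrightarrow> kp_eq L r s c d (pv v) (\<Sum>l\<in>vLn L r d v n. proj l)"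
  by (rule kp_eq_relator) (unfold kp_relators_def, blast)

lemma vLnD: "b \<in> vLn L r d v n \<Longrightarrow> b \<in> L \<and> r b = v \<and> d b = n"
  unfolding vLn_def by auto

lemma proj_eq_sum_vLn_nonvertex:
  assumes l: "l \<in> L" and dl: "d l \<noteq> 0" and n0: "n \<noteq> 0"
  shows "kp_eq L r s c d (proj l) (\<Sum>b\<in>vLn L r d (s l) n. proj (c l b))"
proof -
  let ?V = "vLn L r d (s l) n"
  have sv: "s l \<in> vertices L r" using source_in_vertices l .
  have "kp_eq L r s c d (proj l) (fmul (fmul (sp d l) (pv (s l))) (sst d l))"
    using kp_eq_sym[OF kp_eq_rmult[OF kp_eq_kp2_source[OF l dl] freealg_sst[OF l]]] .
  also have "fmul (fmul (sp d l) (pv (s l))) (sst d l) = fmul (sp d l) (fmul (pv (s l)) (sst d l))"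
    by (rule fmul_assoc)
  finally have e1: "kp_eq L r s c d (proj l) (fmul (sp d l) (fmul (pv (s l)) (sst d l)))" .
  have e2: "kp_eq L r s c d (fmul (sp d l) (fmul (pv (s l)) (sst d l)))
      (fmul (sp d l) (fmul (\<Sum>b\<in>?V. proj b) (sst d l)))"
    by (rule kp_eq_lmult[OF kp_eq_rmult[OF kp_eq_kp4[OF sv n0] freealg_sst[OF l]] freealg_sp[OF l]])
  have e3: "fmul (sp d l) (fmul (\<Sum>b\<in>?V. proj b) (sst d l))
      = (\<Sum>b\<in>?V. fmul (fmul (sp d l) (sp d b)) (fmul (sst d b) (sst d l)))"
    unfolding fmul_sum_left fmul_sum_right by (simp add: fmul_assoc)
  have e4: "kp_eq L r s c d (\<Sum>b\<in>?V. fmul (fmul (sp d l) (sp d b)) (fmul (sst d b) (sst d l)))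
      (\<Sum>b\<in>?V. proj (c l b))"
  proof (rule kp_eq_sum)
    fix b assume b: "b \<in> ?V"
    have bb: "b \<in> L" "r b = s l" "d b \<noteq> 0" using vLnD[OF b] n0 by auto
    have cb: "c l b \<in> L" using comp_laws l bb by auto
    show "kp_eq L r s c d (fmul (fmul (sp d l) (sp d b)) (fmul (sst d b) (sst d l))) (proj (c l b))"
      by (rule kp_eq_mult[OF kp_eq_kp2_sp[OF l bb(1) dl bb(3,2)] kp_eq_kp2_sst[OF l bb(1) dl bb(3,2)]
            freealg_sp[OF cb] freealg_fmul[OF freealg_sst[OF bb(1)] freealg_sst[OF l]]])
  qed
  show ?thesis using kp_eq_trans[OF e1 kp_eq_trans[OF e2 e4[folded e3]]] .
qed

lemma proj_eq_sum_vLn: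
  assumes l: "l \<in> L"
  shows "kp_eq L r s c d (proj l) (\<Sum>b\<in>vLn L r d (s l) n. proj (c l b))"
proof (cases "n = 0")
  case True
  have "vLn L r d (s l) n = {s l}"
    using True deg0_vertex vertex_laws[OF l] unfolding vLn_def by auto
  thus ?thesis using vertex_laws[OF l] kp_eq_refl by simp
next
  case n0: False
  show ?thesis
  proof (cases "d l = 0")
    case True
    have sv: "s l \<in> vertices L r" using source_in_vertices l .
    have ll: "r l = l" "s l = l" using deg0_vertex[OF l True] by auto
    have spl: "sp d l = pv l" "sst d l = pv l" unfolding sp_def sst_def pv_def using True by auto
    have "kp_eq L r s c d (proj l) (pv l)" unfolding spl using kp_eq_kp1 sv ll by simp
    moreover have "kp_eq L r s c d (pv l) (\<Sum>b\<in>vLn L r d (s l) n. proj b)"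
      using kp_eq_kp4[OF sv n0] ll by simp
    moreover have "c l b = b" if "b \<in> vLn L r d (s l) n" for b using vLnD[OF that] vertex_laws ll by metis
    ultimately show ?thesis using kp_eq_trans by simp
  next
    case False
    thus ?thesis using proj_eq_sum_vLn_nonvertex l n0 by blast
  qed
qed

lemma extensions_eq_image_vLn:
  assumes A: "A \<in> L" and m: "d A \<le> m"
  shows "{l \<in> L. is_prefix A l \<and> d l = m} = c A ` vLn L r d (s A) (m - d A)"
proof
  show "c A ` vLn L r d (s A) (m - d A) \<subseteq> {l \<in> L. is_prefix A l \<and> d l = m}"
  proof
    fix l assume "l \<in> c A ` vLn L r d (s A) (m - d A)"
    then obtain b where b: "b \<in> vLn L r d (s A) (m - d A)" "l = c A b" by auto
    have bb: "b \<in> L" "r b = s A" "d b = m - d A" using vLnD[OF b(1)] by auto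
    have "d l = m" using comp_laws(4)[OF A bb(1)] bb b(2) m by (simp add: le_fun_def fun_eq_iff)
    thus "l \<in> {l \<in> L. is_prefix A l \<and> d l = m}"
      using comp_laws(1)[OF A bb(1)] is_prefix_comp[OF A bb(1)] bb b by auto
  qed
  show "{l \<in> L. is_prefix A l \<and> d l = m} \<subseteq> c A ` vLn L r d (s A) (m - d A)"
  proof
    fix l assume l: "l \<in> {l \<in> L. is_prefix A l \<and> d l = m}"
    let ?b = "path_tail A l"
    have bb: "?b \<in> L" "s A = r ?b" "c A ?b = l" using path_tail l by auto
    have "d ?b = m - d A" using path_tail_deg l by auto
    hence "?b \<in> vLn L r d (s A) (m - d A)" using bb unfolding vLn_def by auto
    thus "l \<in> c A ` vLn L r d (s A) (m - d A)" using bb by force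
  qed
qed

lemma proj_eq_sum_extensions:
  assumes "A \<in> L" "d A \<le> m"
  shows "kp_eq L r s c d (proj A) (\<Sum>l\<in>{l \<in> L. is_prefix A l \<and> d l = m}. proj l)"
proof -
  have "inj_on (c A) (vLn L r d (s A) (m - d A))"
    by (rule inj_onI) (use vLnD path_tail_comp assms(1) in metis)
  thus ?thesis
    unfolding extensions_eq_image_vLn[OF assms] sum.reindex[OF \<open>inj_on _ _\<close>] comp_def
    using proj_eq_sum_vLn[OF assms(1), of "m - d A"] by simp
qed

section \<open>Elements of the commutant and cylinder sets\<close>

definition cylinder :: "'p \<Rightarrow> (('k \<Rightarrow> nat) \<Rightarrow> 'p) set" where
  "cylinder l = {x \<in> inf_paths. x (d l) = l}"

lemma cylinder_comp_iff:
  assumes "l \<in> L" "m \<in> L" "s l = r m"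
  shows "x \<in> cylinder (c l m) \<longleftrightarrow> x \<in> cylinder l \<and> shift (d l) x \<in> cylinder m"
  unfolding cylinder_def using inf_path_through_comp_iff[OF _ assms] shift_inf_path by blast

lemma prepend_cylinder:
  assumes "l \<in> L" "x \<in> inf_paths" "x 0 = s l"
  shows "prepend l x \<in> cylinder l" "shift (d l) (prepend l x) = x"
  unfolding cylinder_def using prepend_inf_path[OF assms] prepend_at[OF assms] shift_prepend[OF assms]
  by auto

lemma extensions_subset_of_cylinder_subset:
  assumes "cylinder A \<subseteq> cylinder B" "d A \<le> m" "d B \<le> m"
  shows "{l \<in> L. is_prefix A l \<and> d l = m} \<subseteq> {l \<in> L. is_prefix B l \<and> d l = m}"
proof
  fix l assume "l \<in> {l \<in> L. is_prefix A l \<and> d l = m}"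
  hence l: "l \<in> L" "is_prefix A l" "d l = m" by auto
  obtain x where x: "x \<in> inf_paths" "x (d l) = l" using inf_path_through l(1) by blast
  have "x (d A) = A" using inf_path_eq_prefix[OF x(1)] x(2) l(2,3) assms(2) by metis
  hence "x (d B) = B" using assms(1) x(1) unfolding cylinder_def by blast
  hence "is_prefix B l" using inf_path_prefix[OF x(1) assms(3)] x(2) l(3) by metis
  thus "l \<in> {l \<in> L. is_prefix B l \<and> d l = m}" using l by simp
qed

context
  fixes mu nu :: 'p and a :: "'r::comm_ring_1"
  assumes mu: "mu \<in> L" and nu: "nu \<in> L" and source_eq: "s mu = s nu" and a: "a \<noteq> 0"
    and commutes: "in_commutant L r s c d (fsmult a (fmul (sp d mu) (sst d nu)))"
begin

lemma commutant_preserves_cylinders: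
  assumes l: "l \<in> L" and z: "z \<in> cylinder mu"
  shows "prepend nu (shift (d mu) z) \<in> cylinder l \<longleftrightarrow> z \<in> cylinder l"
proof -
  define X :: "'p kpgen list \<Rightarrow> 'r" where "X = fsmult a (fmul (sp d mu) (sst d nu))"
  let ?\<tau> = "prepend nu (shift (d mu) z)"
  let ?one = "\<lambda>_. 1 :: 'r"
  have finX: "finite_supp X" unfolding X_def by (auto intro!: finite_supp_smult finite_supp_fmul)
  have z': "z \<in> inf_paths" "z (d mu) = mu" using z unfolding cylinder_def by auto
  have t: "shift (d mu) z \<in> inf_paths" "shift (d mu) z 0 = s nu"
    using shift_inf_path shift_at0 z' source_eq by auto
  have rep_X: "rep path_action X h z = a * h ?\<tau>" for h
    unfolding X_def using z' t
    by (simp add: rep_smult rep_fmul finite_supp_fmul rep_sp[OF mu] rep_sst[OF nu])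
  have "proj l \<in> diag_sub L d" using l by (rule diag_sub.gen)
  hence "kp_eq L r s c d (fmul X (proj l)) (fmul (proj l) X)"
    using commutes unfolding in_commutant_def X_def by blast
  hence "rep path_action (fmul X (proj l)) ?one z = rep path_action (fmul (proj l) X) ?one z"
    by (rule rep_kp_eq) (auto intro!: finite_supp_fmul finX)
  hence "a * (if ?\<tau> \<in> cylinder l then 1 else 0) = (if z \<in> cylinder l then a else 0)"
    unfolding rep_fmul[OF finX finite_supp_fmul[OF finite_supp_sp finite_supp_sst]]
      rep_fmul[OF finite_supp_fmul[OF finite_supp_sp finite_supp_sst] finX]
      rep_X rep_proj[OF l] cylinder_def using z' by simp
  thus ?thesis using a by (auto split: if_splits)
qed

lemma commutant_cylinder_eq:
  assumes g: "g \<in> L" "r g = s mu"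
  shows "cylinder (c mu g) = cylinder (c nu g)"
proof
  have cm: "c mu g \<in> L" and cn: "c nu g \<in> L" using comp_laws mu nu g source_eq by auto
  note mu_g = cylinder_comp_iff[OF mu g(1) g(2)[symmetric]]
  note nu_g = cylinder_comp_iff[OF nu g(1) g(2)[symmetric, unfolded source_eq]]
  show "cylinder (c mu g) \<subseteq> cylinder (c nu g)"
  proof
    fix y assume "y \<in> cylinder (c mu g)"
    hence y: "y \<in> cylinder mu" "shift (d mu) y \<in> cylinder g" using mu_g by auto
    hence t: "shift (d mu) y \<in> inf_paths" "shift (d mu) y 0 = s nu"
      using shift_at0 source_eq unfolding cylinder_def by auto
    have "prepend nu (shift (d mu) y) \<in> cylinder (c nu g)"
      using nu_g prepend_cylinder[OF nu t] y(2) by simp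
    thus "y \<in> cylinder (c nu g)" using commutant_preserves_cylinders[OF cn y(1)] by simp
  qed
  show "cylinder (c nu g) \<subseteq> cylinder (c mu g)"
  proof
    fix y assume "y \<in> cylinder (c nu g)"
    hence y: "y \<in> cylinder nu" "shift (d nu) y \<in> cylinder g" using nu_g by auto
    hence t: "shift (d nu) y \<in> inf_paths" "shift (d nu) y 0 = s mu"
      using shift_at0 source_eq unfolding cylinder_def by auto
    let ?z = "prepend mu (shift (d nu) y)"
    have z: "?z \<in> cylinder (c mu g)" "?z \<in> cylinder mu" "shift (d mu) ?z = shift (d nu) y"
      using mu_g prepend_cylinder[OF mu t] y(2) by auto
    have "prepend nu (shift (d mu) ?z) = y"
      using z(3) prepend_shift[OF _ nu] y(1) unfolding cylinder_def by simp
    thus "y \<in> cylinder (c mu g)" using commutant_preserves_cylinders[OF cm z(2)] z(1) by simp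
  qed
qed

end

end

theorem lemma4p9:
  fixes L :: "'p set" and r s :: "'p \<Rightarrow> 'p" and c :: "'p \<Rightarrow> 'p \<Rightarrow> 'p"
    and d :: "'p \<Rightarrow> ('k::finite \<Rightarrow> nat)"
    and mu nu :: 'p and a :: "'r::comm_ring_1"
  assumes "kgraph L r s c d"
    and "row_finite_no_sources L r d"
    and "mu \<in> L" and "nu \<in> L" and "s mu = s nu"
    and "a \<noteq> 0"
    and "in_commutant L r s c d (fsmult a (fmul (sp d mu) (sst d nu)))"
  shows "cycline_pair L r s c d TYPE('r) mu nu"
proof -
  interpret row_finite_kgraph L r s c d using assms(1,2) by unfold_locales
  show ?thesis unfolding cycline_pair_def
  proof (intro conjI ballI impI assms(3-5))
    fix g assume g: "g \<in> L" "r g = s mu"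
    let ?A = "c mu g" and ?B = "c nu g"
    have A: "?A \<in> L" and B: "?B \<in> L" using comp_laws assms(3-5) g by auto
    define m where "m = sup (d ?A) (d ?B)"
    have mA: "d ?A \<le> m" and mB: "d ?B \<le> m" unfolding m_def by auto
    have "cylinder ?A = cylinder ?B" using commutant_cylinder_eq[OF assms(3-7) g] .
    hence ext: "{l \<in> L. is_prefix ?A l \<and> d l = m} = {l \<in> L. is_prefix ?B l \<and> d l = m}"
      using extensions_subset_of_cylinder_subset mA mB by (intro equalityI) auto
    show "kp_eq L r s c d (proj ?A :: 'p kpgen list \<Rightarrow> 'r) (proj ?B)"
      using kp_eq_trans[OF proj_eq_sum_extensions[OF A mA, unfolded ext]
          kp_eq_sym[OF proj_eq_sum_extensions[OF B mB]]] .
  qed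
qed

end
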